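(* Let $q=2^m\geq 4$ with $m$ a positive integer, let $b\in\mathbb{F}_q^*$ and $\delta\in\mathbb{F}_{q^2}\setminus\mathbb{F}_q$. Put $$B=b^4(\delta^q+\delta)^4\delta^{q+1},\quad C=b^4(\delta^q+\delta)^4,\quad D=b^4(\delta^q+\delta)^5,$$ and define $S_{-1}=0$, $S_0=1$, $S_i=C^{2^{i-1}}S_{i-1}+D^{2^{i-1}}S_{i-2}$ for $i\geq1$. If the polynomial $$P(x)=b(x^q+x+\delta)^{1+(q^2+q)/4}+x$$ permutes $\mathbb{F}_{q^2}$, then its compositional inverse over $\mathbb{F}_{q^2}$ is $$P^{-1}(x)=x+b\left(\delta+\sum_{i=0}^{m-1}\left(S_{m-2-i}^{2^{i+1}}+D^{1-2^{i+1}}S_i\right)\left((x^q+x)^4+B\right)^{2^i}\right)^{1+(q^2+q)/4}.$$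
   Context: The compositional inverse of a permutation polynomial $f$ of $\mathbb{F}_{Q}$ is the unique polynomial $f^{-1}$ (modulo $x^Q-x$) with $f(f^{-1}(c))=f^{-1}(f(c))=c$ for all $c\in\mathbb{F}_Q$. *)

theory Defs
  imports Main
begin

text \<open>Shifted sequence: Sshift C D n = S_(n-1), i.e. Sshift C D 0 = S_(-1) = 0,
  Sshift C D 1 = S_0 = 1, and S_i = C^(2^(i-1)) S_(i-1) + D^(2^(i-1)) S_(i-2) for i >= 1.\<close>
fun Sshift :: "'a::field \<Rightarrow> 'a \<Rightarrow> nat \<Rightarrow> 'a" where
  "Sshift C D 0 = 0"
| "Sshift C D (Suc 0) = 1"
| "Sshift C D (Suc (Suc n)) = C ^ (2 ^ n) * Sshift C D (Suc n) + D ^ (2 ^ n) * Sshift C D n"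

definition S_seq :: "'a::field \<Rightarrow> 'a \<Rightarrow> int \<Rightarrow> 'a" where
  "S_seq C D i = (if i < -1 then 0 else Sshift C D (nat (i + 1)))"

end

theory Submission
  imports Defs "HOL-Computational_Algebra.Polynomial" "HOL-Computational_Algebra.Primes"
begin

(* Let T x = x^q + x be the trace from F_(q^2) to F_q and L t = t^4 + C t^2 + D t.  For t = T x
   one computes T (P x)^4 + B = L t, so x = P x + b (T x + delta)^K can be read off from P x
   once t is recovered from L t.  The 2-semilinear recurrence of the S_i has a splitting formula,
   a dual recurrence S_(n+1) = C S_n^2 + D^2 S_(n-1)^4 and a determinant identity; with them the
   sum in the statement inverts L on F_q up to the factor tau = S_m + D S_(m-2)^2, and tau^2 = tau.
   If tau = 0, the semilinear map psi (u, v) = (v^2, (u^2 + C v^2) / D), whose fixed points are the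
   pairs (beta^2, beta) with L beta = 0, has period 2m on F_(q^2); summing an orbit gives a
   nonzero root of L, and beta + beta^q or beta itself is then a nonzero root in F_q.  Such a root
   makes P non-injective, so tau = 1. *)

section \<open>Finite fields of characteristic two\<close>

lemma field_power_card:
  assumes "finite (UNIV :: 'a::field set)"
  shows "(x::'a) ^ card (UNIV :: 'a set) = x"
proof (cases "x = 0")
  case True
  then show ?thesis using assms by (simp add: finite_UNIV_card_ge_0)
next
  case False
  let ?U = "UNIV - {0::'a}"
  have "x ^ card ?U * \<Prod>?U = (\<Prod>y\<in>?U. x * y)"
    using assms by (simp add: prod.distrib)
  also have "\<dots> = \<Prod>?U"
    by (rule prod.reindex_bij_witness[of _ "\<lambda>y. y / x" "\<lambda>y. x * y"]) (use False in auto)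
  finally have "x ^ card ?U = 1"
    using assms by simp
  moreover have "Suc (card ?U) = card (UNIV :: 'a set)"
    using assms by (simp add: card_Diff_singleton finite_UNIV_card_ge_0)
  ultimately show ?thesis
    by (metis power_Suc2 mult_1_left)
qed

lemma CHAR_eq_2_if_card_even:
  assumes "finite (UNIV :: 'a::field set)" and "even (card (UNIV :: 'a set))"
  shows "CHAR('a) = 2"
proof -
  have "odd (card (UNIV :: 'a set) - 1)"
    using assms by (simp add: finite_UNIV_card_ge_0)
  then have "(-1 :: 'a) = (-1) ^ card (UNIV :: 'a set) * (-1)"
    by simp
  also have "\<dots> = 1"
    by (simp add: field_power_card[OF assms(1)])
  finally have "of_nat 2 = (0 :: 'a)"
    by (simp add: eq_neg_iff_add_eq_0)
  then have "CHAR('a) dvd 2"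
    by (simp only: of_nat_eq_0_iff_char_dvd)
  then show ?thesis
    using CHAR_not_1 by (metis One_nat_def prime_nat_iff two_is_prime_nat)
qed

context
  assumes CHAR_2: "CHAR('a::comm_ring_1) = 2"
begin

lemma add_self_char2: "(x::'a) + x = 0"
  using uminus_CHAR_2[OF CHAR_2, of x] by (simp add: add_eq_0_iff2)

lemma add_eq_0_iff_char2: "(x::'a) + y = 0 \<longleftrightarrow> x = y"
  by (metis add_self_char2 add_right_cancel)

lemma add_eq_iff_eq_add_char2: "(x::'a) + y = z \<longleftrightarrow> x = z + y"
  by (metis add_self_char2 add.assoc add_0_right)

lemma frobenius_add_char2: "((x::'a) + y) ^ (2 ^ n) = x ^ (2 ^ n) + y ^ (2 ^ n)"
  by (rule freshmans_dream') (simp_all add: CHAR_2)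

lemma frobenius_sum_char2: "(sum (f::_ \<Rightarrow> 'a) A) ^ (2 ^ n) = (\<Sum>i\<in>A. f i ^ (2 ^ n))"
  by (rule freshmans_dream_sum') (simp_all add: CHAR_2)

end

lemma power_pow2_pow2: "((x::'a::monoid_mult) ^ 2 ^ i) ^ 2 ^ j = x ^ 2 ^ (i + j)"
  by (simp add: power_mult[symmetric] power_add)

lemma power_pow2_square: "((x::'a::monoid_mult) ^ 2 ^ n) ^ 2 = x ^ 2 ^ Suc n"
  using power_pow2_pow2[of x n 1] by simp

lemma square_power_pow2: "((x::'a::monoid_mult) ^ 2) ^ 2 ^ n = x ^ 2 ^ Suc n"
  by (simp add: power_mult[symmetric] mult.commute)

lemma fourth_power_pow2: "((x::'a::monoid_mult) ^ 4) ^ 2 ^ n = x ^ 2 ^ Suc (Suc n)"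
  by (simp add: power_mult[symmetric] mult.commute)

lemma exists_sum_pow2_nonzero:
  fixes a :: "nat \<Rightarrow> 'a::field"
  assumes "a 0 \<noteq> 0" and "n \<ge> 1" and "2 ^ (n - 1) < card (UNIV :: 'a set)"
  shows "\<exists>l. (\<Sum>k<n. a k * l ^ 2 ^ k) \<noteq> 0"
proof (rule ccontr)
  assume vanishing: "\<not> ?thesis"
  define p where "p = (\<Sum>k<n. monom (a k) (2 ^ k))"
  have roots: "poly p l = 0" for l
    using vanishing by (simp add: p_def poly_sum poly_monom)
  have "coeff p 1 = (\<Sum>k<n. if k = 0 then a k else 0)"
    unfolding p_def coeff_sum coeff_monom by (intro sum.cong) auto
  then have "coeff p 1 = a 0"
    using assms(2) by simp
  then have "p \<noteq> 0"
    using assms(1) by auto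
  have "degree p \<le> 2 ^ (n - 1)"
    unfolding p_def
  proof (rule degree_sum_le)
    fix k assume "k \<in> {..<n}"
    then have "(2::nat) ^ k \<le> 2 ^ (n - 1)"
      by (intro power_increasing) auto
    then show "degree (monom (a k) (2 ^ k)) \<le> 2 ^ (n - 1)"
      using degree_monom_le order_trans by blast
  qed simp
  moreover have "card (UNIV :: 'a set) \<le> degree p"
    using card_poly_roots_bound[OF \<open>p \<noteq> 0\<close>] roots by simp
  ultimately show False
    using assms(3) by simp
qed

lemma sum_lessThan_shift_periodic:
  assumes "g n = g 0"
  shows "(\<Sum>j<n. g (Suc j)) = (\<Sum>j<n. g j :: 'a::cancel_comm_monoid_add)"
  using sum.lessThan_Suc_shift[of g n] assms by (simp add: add.commute)

lemma sum_three_term_regroup: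
  fixes x y w a :: "nat \<Rightarrow> 'a::comm_semiring_1"
  assumes "n \<ge> 2"
  shows "(\<Sum>i<n. x i * a (i + 2) + y i * a (i + 1) + w i * a i) =
    w 0 * a 0 + (y 0 + w 1) * a 1 + (\<Sum>k\<in>{2..<n}. (x (k - 2) + y (k - 1) + w k) * a k)
    + (x (n - 2) + y (n - 1)) * a n + x (n - 1) * a (n + 1)"
  using assms
proof (induction n rule: nat_induct_at_least)
  case base
  then show ?case by (simp add: numeral_2_eq_2 algebra_simps)
next
  case (Suc n)
  have "{2..<Suc n} = insert n {2..<n}" and "Suc n - 2 = n - 1"
    using Suc.hyps by auto
  with Suc.IH show ?case
    by (simp add: algebra_simps)
qed

lemma inverse_power_pow2_step:
  fixes d :: "'a::field"
  assumes "d \<noteq> 0"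
  shows "inverse (d ^ (2 ^ Suc n - 1)) * d ^ 2 ^ n = inverse (d ^ (2 ^ n - 1))"
proof -
  have "(2::nat) ^ Suc n - 1 = (2 ^ n - 1) + 2 ^ n"
    by simp
  then show ?thesis
    using assms by (simp only: power_add) (simp add: field_simps)
qed

section \<open>The sequence \<open>S\<close>\<close>

declare Sshift.simps(3) [simp del]

locale char2_coeffs =
  fixes C D :: "'a::field"
  assumes CHAR_2: "CHAR('a) = 2"
begin

lemmas add_self = add_self_char2[OF CHAR_2]
lemmas add_eq_0_iff = add_eq_0_iff_char2[OF CHAR_2]
lemmas add_eq_iff_eq_add = add_eq_iff_eq_add_char2[OF CHAR_2]
lemmas frobenius_add = frobenius_add_char2[OF CHAR_2]
lemmas frobenius_sum = frobenius_sum_char2[OF CHAR_2]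

lemma two_eq_zero [simp]: "(2::'a) = 0"
  using of_nat_CHAR[where 'a='a] by (simp add: CHAR_2)

lemma square_add: "((x::'a) + y) ^ 2 = x ^ 2 + y ^ 2"
  using frobenius_add[of x y 1] by simp

lemma fourth_add: "((x::'a) + y) ^ 4 = x ^ 4 + y ^ 4"
  using frobenius_add[of x y 2] by simp

lemma frobenius_inj: "(x::'a) ^ 2 ^ n = y ^ 2 ^ n \<Longrightarrow> x = y"
  by (metis add_eq_0_iff frobenius_add power_eq_0_iff)

abbreviation U :: "nat \<Rightarrow> 'a" where
  "U \<equiv> Sshift C D"

lemma U_rec: "U (Suc (Suc n)) = C ^ 2 ^ n * U (Suc n) + D ^ 2 ^ n * U n"
  by (rule Sshift.simps(3))

lemma U_2 [simp]: "U 2 = C" "U (Suc (Suc 0)) = C"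
  using U_rec[of 0] by (simp_all add: numeral_2_eq_2)

lemma U_split:
  "U (Suc (a + b)) = U (Suc a) * U (Suc b) ^ 2 ^ a + D ^ 2 ^ a * U a * U b ^ 2 ^ Suc a"
proof (induction b rule: induct_nat_012)
  case 1
  show ?case
    using U_rec[of a] by (simp add: mult.commute)
next
  case (ge2 b)
  have frob: "U (Suc (Suc n)) ^ 2 ^ c
      = C ^ 2 ^ (n + c) * U (Suc n) ^ 2 ^ c + D ^ 2 ^ (n + c) * U n ^ 2 ^ c" for n c
    unfolding U_rec frobenius_add power_mult_distrib power_pow2_pow2 ..
  have "U (Suc (a + Suc (Suc b)))
      = C ^ 2 ^ Suc (a + b) * U (Suc (a + Suc b)) + D ^ 2 ^ Suc (a + b) * U (Suc (a + b))"
    using U_rec[of "Suc (a + b)"] by simp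
  also have "\<dots> = U (Suc a) * (C ^ 2 ^ (Suc b + a) * U (Suc (Suc b)) ^ 2 ^ a
        + D ^ 2 ^ (Suc b + a) * U (Suc b) ^ 2 ^ a)
      + D ^ 2 ^ a * U a * (C ^ 2 ^ (b + Suc a) * U (Suc b) ^ 2 ^ Suc a
        + D ^ 2 ^ (b + Suc a) * U b ^ 2 ^ Suc a)"
    unfolding ge2.IH by (simp add: algebra_simps)
  also have "\<dots> = U (Suc a) * U (Suc (Suc (Suc b))) ^ 2 ^ a + D ^ 2 ^ a * U a * U (Suc (Suc b)) ^ 2 ^ Suc a"
    by (simp only: frob[of "Suc b" a] frob[of b "Suc a"])
  finally show ?case .
qed simp

lemma U_dual: "U (Suc (Suc n)) = C * U (Suc n) ^ 2 + D ^ 2 * U n ^ 4"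
  using U_split[of 1 n] by (simp add: add.commute eval_nat_numeral)

lemma U_det: "D ^ 2 * (U (Suc (Suc n)) * U n ^ 2 + U (Suc n) ^ 3) = D ^ 2 ^ Suc n"
proof (induction n)
  case 0
  then show ?case by (simp add: numeral_2_eq_2)
next
  case (Suc n)
  have "D ^ 4 * (x ^ 2 * y ^ 4 + z ^ 6) = (D ^ 2 * (x * y ^ 2 + z ^ 3)) ^ 2" for x y z :: 'a
    unfolding square_add power_mult_distrib by (simp flip: power_mult)
  then have "D ^ 4 * (U (Suc (Suc n)) ^ 2 * U n ^ 4 + U (Suc n) ^ 6)
      = (D ^ 2 * (U (Suc (Suc n)) * U n ^ 2 + U (Suc n) ^ 3)) ^ 2" .
  also have "\<dots> = D ^ 2 ^ Suc (Suc n)"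
    unfolding Suc.IH by (rule power_pow2_square)
  finally have sq: "D ^ 4 * (U (Suc (Suc n)) ^ 2 * U n ^ 4 + U (Suc n) ^ 6) = D ^ 2 ^ Suc (Suc n)" .
  have "D ^ 2 * (U (Suc (Suc (Suc n))) * U (Suc n) ^ 2 + U (Suc (Suc n)) ^ 3)
      = D ^ 4 * (U (Suc (Suc n)) ^ 2 * U n ^ 4 + U (Suc n) ^ 6)
        + D ^ 2 * U (Suc (Suc n)) ^ 2 * (U (Suc (Suc n)) + (C * U (Suc n) ^ 2 + D ^ 2 * U n ^ 4))"
    unfolding U_dual[of "Suc n"] by (simp add: algebra_simps eval_nat_numeral)
  also have "\<dots> = D ^ 2 ^ Suc (Suc n)"
    unfolding sq U_dual[of n, symmetric] add_self by simp
  finally show ?case .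
qed

lemma U_frobenius_fixed:
  assumes "C ^ 2 ^ k = C" and "D ^ 2 ^ k = D"
  shows "U n ^ 2 ^ k = U n"
proof (induction n rule: induct_nat_012)
  case (ge2 n)
  have "(C ^ 2 ^ n) ^ 2 ^ k = C ^ 2 ^ n" "(D ^ 2 ^ n) ^ 2 ^ k = D ^ 2 ^ n"
    using assms by (metis power_mult mult.commute)+
  then show ?case
    using ge2 by (simp add: U_rec frobenius_add power_mult_distrib)
qed simp_all

lemma U_dual_add: "U (Suc (Suc n)) + C * U (Suc n) ^ 2 = D ^ 2 * U n ^ 4"
  using U_dual[of n] by (metis add_eq_iff_eq_add add.commute)

section \<open>The linearized polynomial \<open>x^4 + C x^2 + D x\<close>\<close>

definition lin :: "'a \<Rightarrow> 'a" where
  "lin x = x ^ 4 + C * x ^ 2 + D * x"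

text \<open>In the indexing of the paper, \<open>lin_inv_factor m\<close> is \<open>S_m + D S_(m-2)^2\<close>.\<close>

definition lin_inv_factor :: "nat \<Rightarrow> 'a" where
  "lin_inv_factor m = U (Suc m) + D * U (m - 1) ^ 2"

lemma lin_add: "lin (x + y) = lin x + lin y"
  unfolding lin_def square_add fourth_add by (simp add: algebra_simps)

lemma lin_frobenius:
  assumes "C ^ 2 ^ k = C" and "D ^ 2 ^ k = D"
  shows "lin (x ^ 2 ^ k) = lin x ^ 2 ^ k"
  unfolding lin_def frobenius_add power_mult_distrib assms
  by (simp add: power_mult[symmetric] mult.commute)

lemma lin_inv_factor_idem:
  assumes "m \<ge> 1" and C: "C ^ 2 ^ m = C" and D: "D ^ 2 ^ m = D"
  shows "lin_inv_factor m ^ 2 = lin_inv_factor m"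
proof -
  obtain k where m: "m = Suc k"
    using assms(1) by (cases m) auto
  have "U (Suc (Suc k)) ^ 2 = (C ^ 2 ^ k) ^ 2 * U (Suc k) ^ 2 + (D ^ 2 ^ k) ^ 2 * U k ^ 2"
    unfolding U_rec square_add power_mult_distrib ..
  also have "\<dots> = C * U (Suc k) ^ 2 + D * U k ^ 2"
    using C D by (simp add: m power_pow2_square)
  finally have "lin_inv_factor m ^ 2 = C * U (Suc k) ^ 2 + D * U k ^ 2 + D ^ 2 * U k ^ 4"
    unfolding lin_inv_factor_def m square_add by (simp add: power_mult_distrib flip: power_mult)
  also have "\<dots> = lin_inv_factor m"
    unfolding lin_inv_factor_def m by (simp add: U_dual algebra_simps)
  finally show ?thesis .
qed

end

locale char2_lin = char2_coeffs +
  assumes D_nonzero: "D \<noteq> 0"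
begin

lemma U_twice_if_lin_inv_factor_zero:
  assumes "m \<ge> 1" and C: "C ^ 2 ^ m = C" and D: "D ^ 2 ^ m = D"
    and factor: "lin_inv_factor m = 0"
  shows "U (Suc (2 * m)) = 1" and "U (2 * m) = 0" and "D * U (2 * m - 1) ^ 2 = 1"
proof -
  obtain k where m: "m = Suc k"
    using assms(1) by (cases m) auto
  have fixed: "U n ^ 2 ^ m = U n" "U n ^ 2 ^ Suc m = U n ^ 2" for n
    using U_frobenius_fixed[OF C D] power_pow2_square[of "U n" m] by simp_all
  have factor': "U (Suc m) + D * U k ^ 2 = 0"
    using factor by (simp add: lin_inv_factor_def m)
  have "D * (D * (U (Suc m) * U k ^ 2 + U m ^ 3)) = D * 1"
    using U_det[of k] D by (simp add: m power2_eq_square)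
  then have "D * (U (Suc m) * U k ^ 2 + U m ^ 3) = 1"
    using D_nonzero mult_left_cancel by blast
  then have "D * U m ^ 3 + U (Suc m) * (D * U k ^ 2) = 1"
    by (simp add: algebra_simps)
  then have det: "D * U m ^ 3 = 1 + U (Suc m) * (D * U k ^ 2)"
    by (metis add_eq_iff_eq_add)
  have "U (Suc (2 * m)) = U (Suc m) * U (Suc m) + D * U m * U m ^ 2"
    using U_split[of m m] fixed D by (simp add: mult_2)
  also have "\<dots> = 1 + U (Suc m) * (U (Suc m) + D * U k ^ 2)"
    using det by (simp add: algebra_simps power2_eq_square power3_eq_cube)
  finally show one: "U (Suc (2 * m)) = 1"
    unfolding factor' by simp
  have "U (2 * m) = U (Suc m) * U m + D * U m * U k ^ 2"
    using U_split[of m k] fixed D by (simp add: m mult_2)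
  also have "\<dots> = U m * (U (Suc m) + D * U k ^ 2)"
    by (simp add: algebra_simps)
  finally show zero: "U (2 * m) = 0"
    unfolding factor' by simp
  have "D ^ 2 ^ (2 * m) = D"
    using D by (metis power_pow2_pow2 mult_2)
  then have "D ^ 2 * (U (Suc (2 * m)) * U (2 * m - 1) ^ 2 + U (2 * m) ^ 3) = D"
    using U_det[of "2 * m - 1"] by (simp add: m)
  then show "D * U (2 * m - 1) ^ 2 = 1"
    using D_nonzero unfolding one zero by (simp add: power2_eq_square)
qed

definition psi :: "'a \<times> 'a \<Rightarrow> 'a \<times> 'a" where
  "psi u = (snd u ^ 2, (fst u ^ 2 + C * snd u ^ 2) / D)"

lemma fst_psi [simp]: "fst (psi v) = snd v ^ 2"
  by (simp add: psi_def)

lemma D_mult_snd_psi: "D * snd (psi v) = fst v ^ 2 + C * snd v ^ 2"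
  using D_nonzero by (simp add: psi_def)

lemma psi_step:
  "U (Suc (Suc n)) * fst (psi v) + D * U (Suc n) ^ 2 * snd (psi v)
     = (U (Suc n) * fst v + D * U n ^ 2 * snd v) ^ 2"
proof -
  have "U (Suc (Suc n)) * fst (psi v) + D * U (Suc n) ^ 2 * snd (psi v)
      = U (Suc (Suc n)) * snd v ^ 2 + U (Suc n) ^ 2 * (D * snd (psi v))"
    by (simp add: algebra_simps)
  also have "\<dots> = U (Suc n) ^ 2 * fst v ^ 2 + (U (Suc (Suc n)) + C * U (Suc n) ^ 2) * snd v ^ 2"
    unfolding D_mult_snd_psi by (simp add: algebra_simps)
  also have "\<dots> = (U (Suc n) * fst v + D * U n ^ 2 * snd v) ^ 2"
    unfolding U_dual_add square_add by (simp add: power_mult_distrib flip: power_mult)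
  finally show ?thesis .
qed

lemma psi_iter:
  "U (Suc (Suc n)) * fst ((psi ^^ Suc n) u) + D * U (Suc n) ^ 2 * snd ((psi ^^ Suc n) u)
     = fst u ^ 2 ^ Suc n \<and>
   U (Suc n) * fst ((psi ^^ Suc n) u) + D * U n ^ 2 * snd ((psi ^^ Suc n) u)
     = snd u ^ 2 ^ Suc n"
proof (induction n)
  case 0
  show ?case
    by (simp add: D_mult_snd_psi algebra_simps power2_eq_square)
next
  case (Suc n)
  then show ?case
    using psi_step[of "Suc n"] psi_step[of n] by (simp flip: power_mult)
qed

lemma psi_period:
  assumes "m \<ge> 1" and C: "C ^ 2 ^ m = C" and D: "D ^ 2 ^ m = D"
    and factor: "lin_inv_factor m = 0" and power_card: "\<And>z::'a. z ^ 2 ^ (2 * m) = z"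
  shows "(psi ^^ (2 * m)) u = u"
proof -
  obtain n where n: "2 * m = Suc n"
    using assms(1) by (intro that[of "2 * m - 1"]) simp
  note U_twice = U_twice_if_lin_inv_factor_zero[OF assms(1-4), unfolded n]
  have "fst ((psi ^^ Suc n) u) = fst u" and "snd ((psi ^^ Suc n) u) = snd u"
    using psi_iter[of n u] power_card[unfolded n] U_twice by (simp_all flip: mult.assoc)
  then show ?thesis
    by (simp add: n prod_eq_iff)
qed

lemma psi_scale:
  "(psi ^^ j) (l * x, l * y)
     = (l ^ 2 ^ j * fst ((psi ^^ j) (x, y)), l ^ 2 ^ j * snd ((psi ^^ j) (x, y)))"
proof (induction j)
  case (Suc j)
  then show ?case
    by (simp add: psi_def power_pow2_square algebra_simps add_divide_distrib)
qed simp

lemma psi_sum: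
  "psi (\<Sum>j\<in>A. fst (g j), \<Sum>j\<in>A. snd (g j))
     = (\<Sum>j\<in>A. fst (psi (g j)), \<Sum>j\<in>A. snd (psi (g j)))"
  using frobenius_sum[of "\<lambda>j. fst (g j)" A 1] frobenius_sum[of "\<lambda>j. snd (g j)" A 1]
  by (simp add: psi_def sum_distrib_left sum.distrib[symmetric] sum_divide_distrib[symmetric])

lemma psi_fixed_imp_lin_root:
  assumes "psi w = w"
  shows "fst w = snd w ^ 2" and "lin (snd w) = 0"
proof -
  show fst: "fst w = snd w ^ 2"
    using assms by (metis fst_conv psi_def)
  have "snd w = (fst w ^ 2 + C * snd w ^ 2) / D"
    using assms by (metis snd_conv psi_def)
  then have "D * snd w = snd w ^ 4 + C * snd w ^ 2"
    using D_nonzero unfolding fst by (simp add: field_simps flip: power_mult)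
  then show "lin (snd w) = 0"
    unfolding lin_def by simp
qed

text \<open>By \<open>psi_period\<close> the sum of the orbit of \<open>(l, 0)\<close> is a fixed point of \<open>psi\<close>;
  \<open>exists_sum_pow2_nonzero\<close> chooses \<open>l\<close> so that it is nonzero.\<close>

lemma lin_root_if_lin_inv_factor_zero:
  assumes "m \<ge> 1" and C: "C ^ 2 ^ m = C" and D: "D ^ 2 ^ m = D"
    and factor: "lin_inv_factor m = 0" and card: "card (UNIV :: 'a set) = 2 ^ (2 * m)"
  shows "\<exists>\<beta>. \<beta> \<noteq> 0 \<and> lin \<beta> = 0"
proof -
  define N where "N = 2 * m"
  have "finite (UNIV :: 'a set)"
    using card card.infinite by fastforce
  then have period: "(psi ^^ N) u = u" for u
    using psi_period[OF assms(1-4)] field_power_card[OF \<open>finite UNIV\<close>] card by (simp add: N_def)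
  define a where "a j = fst ((psi ^^ j) (1, 0))" for j
  have "\<exists>l. (\<Sum>j<N. a j * l ^ 2 ^ j) \<noteq> 0"
    using assms(1) card by (intro exists_sum_pow2_nonzero) (simp_all add: a_def N_def)
  then obtain l where l: "(\<Sum>j<N. a j * l ^ 2 ^ j) \<noteq> 0"
    by blast
  define f where "f j = (psi ^^ j) (l, 0)" for j
  have fst_f: "fst (f j) = a j * l ^ 2 ^ j" for j
    using psi_scale[of j l 1 0] by (simp add: f_def a_def mult.commute)
  define w where "w = (\<Sum>j<N. fst (f j), \<Sum>j<N. snd (f j))"
  have "psi w = (\<Sum>j<N. fst (f (Suc j)), \<Sum>j<N. snd (f (Suc j)))"
    unfolding w_def psi_sum by (simp add: f_def)
  also have "\<dots> = w"
    using period[of "(l, 0)"] unfolding w_def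
    by (simp add: sum_lessThan_shift_periodic[of "\<lambda>j. fst (f j)"]
        sum_lessThan_shift_periodic[of "\<lambda>j. snd (f j)"] f_def[of N] f_def[of 0])
  finally have "psi w = w" .
  moreover have "fst w \<noteq> 0"
    using l by (simp add: w_def fst_f)
  ultimately show ?thesis
    using psi_fixed_imp_lin_root by (metis zero_power2)
qed

definition inv_coeff :: "nat \<Rightarrow> nat \<Rightarrow> 'a" where
  "inv_coeff m i = U (m - 1 - i) ^ 2 ^ (i + 1) + inverse (D ^ (2 ^ (i + 1) - 1)) * U (i + 1)"

definition lin_inv :: "nat \<Rightarrow> 'a \<Rightarrow> 'a" where
  "lin_inv m y = (\<Sum>i<m. inv_coeff m i * y ^ 2 ^ i)"

lemma inv_coeff_rec:
  assumes "2 \<le> k" and "k < m"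
  shows "inv_coeff m (k - 2) + inv_coeff m (k - 1) * C ^ 2 ^ (k - 1) + inv_coeff m k * D ^ 2 ^ k = 0"
proof -
  obtain l where k: "k = Suc (Suc l)"
    using assms(1) by (intro that[of "k - 2"]) simp
  obtain p where p: "m - 1 - l = Suc (Suc p)"
    using assms(2) by (intro that[of "m - 3 - l"]) (simp add: k)
  then have p': "m - 1 - Suc l = Suc p" "m - 1 - Suc (Suc l) = p"
    by simp_all
  have "(U (Suc (Suc p)) + (C * U (Suc p) ^ 2 + D ^ 2 * U p ^ 4)) ^ 2 ^ Suc l = 0"
    unfolding U_dual[symmetric] by simp
  then have dual: "U (Suc (Suc p)) ^ 2 ^ Suc l + U (Suc p) ^ 2 ^ Suc (Suc l) * C ^ 2 ^ Suc l
      + U p ^ 2 ^ Suc (Suc (Suc l)) * D ^ 2 ^ Suc (Suc l) = 0"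
    unfolding frobenius_add power_mult_distrib square_power_pow2 fourth_power_pow2
    by (simp add: algebra_simps)
  let ?E = "inverse (D ^ (2 ^ Suc (Suc l) - 1))"
  have "inverse (D ^ (2 ^ Suc l - 1)) * U (Suc l) + ?E * U (Suc (Suc l)) * C ^ 2 ^ Suc l
      + inverse (D ^ (2 ^ Suc (Suc (Suc l)) - 1)) * U (Suc (Suc (Suc l))) * D ^ 2 ^ Suc (Suc l)
      = ?E * (D ^ 2 ^ Suc l * U (Suc l) + C ^ 2 ^ Suc l * U (Suc (Suc l)) + U (Suc (Suc (Suc l))))"
    unfolding inverse_power_pow2_step[OF D_nonzero, of "Suc l", symmetric]
      inverse_power_pow2_step[OF D_nonzero, of "Suc (Suc l)", symmetric]
    by (simp add: algebra_simps)
  also have "\<dots> = 0"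
    unfolding U_rec[of "Suc l"] by (simp add: algebra_simps)
  finally have rec: "inverse (D ^ (2 ^ Suc l - 1)) * U (Suc l) + ?E * U (Suc (Suc l)) * C ^ 2 ^ Suc l
      + inverse (D ^ (2 ^ Suc (Suc (Suc l)) - 1)) * U (Suc (Suc (Suc l))) * D ^ 2 ^ Suc (Suc l) = 0" .
  have "inv_coeff m l + inv_coeff m (Suc l) * C ^ 2 ^ Suc l
      + inv_coeff m (Suc (Suc l)) * D ^ 2 ^ Suc (Suc l) = 0"
    using arg_cong2[where f="(+)", OF dual rec] unfolding inv_coeff_def p p'
    by (simp add: algebra_simps)
  then show ?thesis
    by (simp add: k)
qed

lemma inv_coeff_boundary:
  assumes m: "m = Suc (Suc j)" and D: "D ^ 2 ^ m = D"
  shows "inv_coeff m 0 * D + inv_coeff m j + inv_coeff m (Suc j) * C ^ 2 ^ Suc j = lin_inv_factor m"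
    and "inv_coeff m 0 * C + inv_coeff m 1 * D ^ 2 + inv_coeff m (Suc j) = 0"
proof -
  have "D * D ^ (2 ^ m - 1) = D * 1"
    using D by (simp flip: power_Suc)
  then have D1: "D ^ (2 ^ m - 1) = 1"
    using D_nonzero by simp
  have "D ^ 2 ^ Suc j = inverse (D ^ (2 ^ Suc j - 1))"
    using inverse_power_pow2_step[OF D_nonzero, of "Suc j"] D1 by (simp add: m)
  then have c: "inv_coeff m 0 = U (Suc j) ^ 2 + inverse D"
    "inv_coeff m 1 = U j ^ 4 + inverse (D ^ 3) * C"
    "inv_coeff m j = 1 + D ^ 2 ^ Suc j * U (Suc j)"
    "inv_coeff m (Suc j) = U (Suc (Suc j))"
    using D1 by (simp_all add: inv_coeff_def m)
  have "inv_coeff m 0 * D + inv_coeff m j + inv_coeff m (Suc j) * C ^ 2 ^ Suc j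
      = U (Suc (Suc (Suc j))) + D * U (Suc j) ^ 2 + (inverse D * D + 1)"
    unfolding c U_rec[of "Suc j"] by (simp add: algebra_simps)
  also have "\<dots> = lin_inv_factor m"
    using D_nonzero by (simp add: lin_inv_factor_def m)
  finally show "inv_coeff m 0 * D + inv_coeff m j + inv_coeff m (Suc j) * C ^ 2 ^ Suc j
      = lin_inv_factor m" .
  have "inverse (D ^ 3) * D ^ 2 = inverse D"
    using D_nonzero by (simp add: field_simps eval_nat_numeral)
  then have "inv_coeff m 0 * C + inv_coeff m 1 * D ^ 2 + inv_coeff m (Suc j)
      = U (Suc (Suc j)) + (C * U (Suc j) ^ 2 + D ^ 2 * U j ^ 4)"
    unfolding c by (simp add: algebra_simps)
  then show "inv_coeff m 0 * C + inv_coeff m 1 * D ^ 2 + inv_coeff m (Suc j) = 0"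
    by (simp flip: U_dual)
qed

lemma lin_inv_lin:
  assumes "m \<ge> 2" and D: "D ^ 2 ^ m = D" and t: "t ^ 2 ^ m = t"
  shows "lin_inv m (lin t) = lin_inv_factor m * t"
proof -
  obtain j where m: "m = Suc (Suc j)"
    using assms(1) by (intro that[of "m - 2"]) simp
  then have m_minus: "m - 2 = j" "m - Suc 0 = Suc j"
    by simp_all
  define c where "c = inv_coeff m"
  define a where "a n = t ^ 2 ^ n" for n
  have "lin t ^ 2 ^ i = a (i + 2) + C ^ 2 ^ i * a (i + 1) + D ^ 2 ^ i * a i" for i
    unfolding lin_def a_def frobenius_add power_mult_distrib fourth_power_pow2 square_power_pow2
    by simp
  then have "lin_inv m (lin t)
      = (\<Sum>i<m. c i * a (i + 2) + (c i * C ^ 2 ^ i) * a (i + 1) + (c i * D ^ 2 ^ i) * a i)"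
    unfolding lin_inv_def c_def by (simp add: algebra_simps)
  also have "\<dots> = (c 0 * D) * a 0 + (c 0 * C + c 1 * D ^ 2) * a 1
      + (\<Sum>k\<in>{2..<m}. (c (k - 2) + c (k - 1) * C ^ 2 ^ (k - 1) + c k * D ^ 2 ^ k) * a k)
      + (c j + c (Suc j) * C ^ 2 ^ Suc j) * a m + c (Suc j) * a (m + 1)"
    using sum_three_term_regroup[OF assms(1),
        where x = c and y = "\<lambda>i. c i * C ^ 2 ^ i" and w = "\<lambda>i. c i * D ^ 2 ^ i" and a = a]
    by (simp add: m_minus)
  also have "(\<Sum>k\<in>{2..<m}. (c (k - 2) + c (k - 1) * C ^ 2 ^ (k - 1) + c k * D ^ 2 ^ k) * a k) = 0"
    using inv_coeff_rec by (simp add: c_def)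
  finally have regrouped: "lin_inv m (lin t) = (c 0 * D) * a 0 + (c 0 * C + c 1 * D ^ 2) * a 1
      + (c j + c (Suc j) * C ^ 2 ^ Suc j) * a m + c (Suc j) * a (m + 1)"
    by simp
  have "a 0 = t" "a 1 = t ^ 2" "a m = t" "a (m + 1) = t ^ 2"
    using t power_pow2_square[of t m] by (simp_all add: a_def)
  then have "lin_inv m (lin t) = (c 0 * D + c j + c (Suc j) * C ^ 2 ^ Suc j) * t
      + (c 0 * C + c 1 * D ^ 2 + c (Suc j)) * t ^ 2"
    using regrouped by (simp add: algebra_simps)
  then show ?thesis
    unfolding c_def inv_coeff_boundary[OF m D] by simp
qed

lemma lin_inv_factor_eq_1:
  assumes "m \<ge> 1" and C: "C ^ 2 ^ m = C" and D: "D ^ 2 ^ m = D"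
    and card: "card (UNIV :: 'a set) = 2 ^ (2 * m)"
    and no_root: "\<And>\<beta>. \<beta> ^ 2 ^ m = \<beta> \<Longrightarrow> lin \<beta> = 0 \<Longrightarrow> \<beta> = 0"
  shows "lin_inv_factor m = 1"
proof -
  have "lin_inv_factor m \<noteq> 0"
  proof
    assume "lin_inv_factor m = 0"
    then obtain \<beta> where "\<beta> \<noteq> 0" and root: "lin \<beta> = 0"
      using lin_root_if_lin_inv_factor_zero[OF assms(1-3) _ card] by blast
    have "finite (UNIV :: 'a set)"
      using card card.infinite by fastforce
    then have "(\<beta> ^ 2 ^ m) ^ 2 ^ m = \<beta>"
      using field_power_card[of \<beta>] card by (simp add: power_pow2_pow2 mult_2)
    then have "(\<beta> + \<beta> ^ 2 ^ m) ^ 2 ^ m = \<beta> + \<beta> ^ 2 ^ m"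
      by (simp add: frobenius_add add.commute)
    moreover have "lin (\<beta> + \<beta> ^ 2 ^ m) = 0"
      by (simp add: lin_add lin_frobenius[OF C D] root)
    ultimately have "\<beta> ^ 2 ^ m = \<beta>"
      using no_root add_eq_0_iff by metis
    then show False
      using no_root root \<open>\<beta> \<noteq> 0\<close> by blast
  qed
  moreover have "lin_inv_factor m * lin_inv_factor m = lin_inv_factor m * 1"
    using lin_inv_factor_idem[OF assms(1-3)] by (simp add: power2_eq_square)
  ultimately show ?thesis
    by simp
qed

lemma lin_inv_eq_S_seq_sum:
  assumes "m \<ge> 1"
  shows "lin_inv m y = (\<Sum>i = 0..m - 1.
    (S_seq C D (int m - 2 - int i) ^ 2 ^ (i + 1) + inverse (D ^ (2 ^ (i + 1) - 1)) * S_seq C D (int i))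
    * y ^ 2 ^ i)"
proof -
  have "{0..m - 1} = {..<m}"
    using assms by auto
  moreover have "S_seq C D (int m - 2 - int i) = U (m - 1 - i)" if "i < m" for i
    using that by (simp add: S_seq_def nat_diff_distrib)
  moreover have "S_seq C D (int i) = U (i + 1)" for i
    by (simp add: S_seq_def nat_add_distrib)
  ultimately show ?thesis
    by (simp add: lin_inv_def inv_coeff_def)
qed

end

section \<open>The permutation polynomial\<close>

locale perm_poly_setting =
  fixes m q :: nat and b \<delta> B C D :: "'a::{finite,field}" and P :: "'a \<Rightarrow> 'a"
  assumes q_eq: "q = 2 ^ m" and q_ge_4: "q \<ge> 4"
    and card_UNIV: "card (UNIV :: 'a set) = q ^ 2"
    and b_in: "b ^ q = b" and b_nonzero: "b \<noteq> 0" and \<delta>_notin: "\<delta> ^ q \<noteq> \<delta>"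
    and B_eq: "B = b ^ 4 * (\<delta> ^ q + \<delta>) ^ 4 * \<delta> ^ (q + 1)"
    and C_eq: "C = b ^ 4 * (\<delta> ^ q + \<delta>) ^ 4"
    and D_eq: "D = b ^ 4 * (\<delta> ^ q + \<delta>) ^ 5"
    and P_eq: "\<And>x. P x = b * (x ^ q + x + \<delta>) ^ (1 + (q ^ 2 + q) div 4) + x"
begin

definition K :: nat where
  "K = 1 + (q ^ 2 + q) div 4"

definition trace :: "'a \<Rightarrow> 'a" where
  "trace x = x ^ q + x"

lemma P_trace: "P x = b * (trace x + \<delta>) ^ K + x"
  by (simp add: P_eq trace_def K_def)

lemma m_ge_2: "m \<ge> 2"
proof (rule ccontr)
  assume "\<not> m \<ge> 2"
  then have "q \<le> 2 ^ 1"
    unfolding q_eq by (intro power_increasing) auto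
  with q_ge_4 show False
    by simp
qed

lemma card_eq_pow2: "card (UNIV :: 'a set) = 2 ^ (2 * m)"
  using card_UNIV by (simp add: q_eq power_mult mult.commute)

lemma CHAR_2: "CHAR('a) = 2"
  using m_ge_2 card_eq_pow2 by (intro CHAR_eq_2_if_card_even) simp_all

lemma frobenius_q: "((x::'a) + y) ^ q = x ^ q + y ^ q"
  unfolding q_eq by (rule frobenius_add_char2[OF CHAR_2])

lemma power_q_q: "((x::'a) ^ q) ^ q = x"
  using field_power_card[of x] card_UNIV by (simp add: power_mult[symmetric] power2_eq_square)

lemma trace_in: "trace x ^ q = trace x"
  unfolding trace_def frobenius_q power_q_q by (simp add: add.commute)

lemma trace_add: "trace (x + y) = trace x + trace y"
  unfolding trace_def frobenius_q by (simp add: algebra_simps)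

lemma trace_\<delta>_nonzero: "trace \<delta> \<noteq> 0"
  using \<delta>_notin add_eq_0_iff_char2[OF CHAR_2] by (simp add: trace_def)

lemma C_in: "C ^ q = C" and D_in: "D ^ q = D"
  unfolding C_eq D_eq power_mult_distrib
  by (metis b_in trace_in trace_def power_mult mult.commute)+

lemma D_nonzero: "D \<noteq> 0"
  using b_nonzero trace_\<delta>_nonzero by (simp add: D_eq trace_def)

sublocale char2_lin C D
  using CHAR_2 D_nonzero by unfold_locales

lemma four_K: "4 * K = 4 + q * q + q"
proof -
  define r :: nat where "r = 2 ^ (m - 2)"
  have "q = 2 ^ 2 * r"
    unfolding q_eq r_def using m_ge_2 by (metis le_add_diff_inverse power_add)
  then have "q ^ 2 + q = 4 * (q * r + r)" and "q * q + q = 4 * (q * r + r)"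
    by (simp_all add: power2_eq_square algebra_simps)
  then show ?thesis
    by (simp add: K_def)
qed

lemma zero_power_q [simp]: "(0::'a) ^ q = 0"
  using q_ge_4 by simp

lemma trace_fourth:
  assumes t: "t ^ q = t"
  shows "trace (b * (t + \<delta>) ^ K) ^ 4 = C * t ^ 2 + D * t + B"
proof -
  define z where "z = t + \<delta>"
  define Z where "Z = z ^ q"
  have Z: "Z = t + \<delta> ^ q"
    unfolding Z_def z_def frobenius_q t ..
  have Zq: "Z ^ q = z" and zqq: "z ^ (q * q) = z" and Zqq: "Z ^ (q * q) = Z"
    unfolding Z_def power_mult power_q_q by (rule refl)+
  have "((z ^ K) ^ q) ^ 4 = Z ^ (4 * K)"
    unfolding Z_def by (simp only: power_mult[symmetric] mult.assoc mult.commute mult.left_commute)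
  also have "\<dots> = Z ^ 4 * Z * z"
    unfolding four_K power_add Zqq Zq ..
  finally have fst_term: "((z ^ K) ^ q) ^ 4 = Z ^ 4 * Z * z" .
  have "(z ^ K) ^ 4 = z ^ (4 * K)"
    by (simp only: power_mult[symmetric] mult.commute)
  also have "\<dots> = z ^ 4 * z * Z"
    unfolding four_K power_add zqq Z_def ..
  finally have snd_term: "(z ^ K) ^ 4 = z ^ 4 * z * Z" .
  have "trace (b * z ^ K) ^ 4 = b ^ 4 * (z * Z) * (Z + z) ^ 4"
    unfolding trace_def power_mult_distrib b_in fourth_add fst_term snd_term
    by (simp only: algebra_simps)
  also have "Z + z = \<delta> ^ q + \<delta>"
    unfolding Z z_def by (simp add: algebra_simps)
  also have "z * Z = t ^ 2 + (\<delta> ^ q + \<delta>) * t + \<delta> ^ (q + 1)"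
    unfolding Z z_def by (simp add: algebra_simps power2_eq_square)
  also have "b ^ 4 * (t ^ 2 + (\<delta> ^ q + \<delta>) * t + \<delta> ^ (q + 1)) * (\<delta> ^ q + \<delta>) ^ 4
      = C * t ^ 2 + D * t + B"
    unfolding B_eq C_eq D_eq by (simp add: algebra_simps power_Suc2[of _ 4, simplified])
  finally show ?thesis
    unfolding z_def .
qed

lemma trace_P: "trace (P x) = trace x + trace (b * (trace x + \<delta>) ^ K)"
  unfolding P_trace trace_add by (simp add: add.commute)

lemma lin_trace: "trace (P x) ^ 4 + B = lin (trace x)"
  unfolding trace_P fourth_add trace_fourth[OF trace_in] lin_def by (simp add: algebra_simps)

lemma no_subfield_root_if_inj:
  assumes "inj P" and \<beta>: "\<beta> ^ q = \<beta>" and root: "lin \<beta> = 0"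
  shows "\<beta> = 0"
proof -
  define x where "x = b * (\<delta> ^ K + (\<beta> + \<delta>) ^ K)"
  have "trace (b * \<delta> ^ K) ^ 4 = B"
    using trace_fourth[of 0] by simp
  moreover have "\<beta> ^ 4 = C * \<beta> ^ 2 + D * \<beta>"
    using root unfolding lin_def by (metis add_eq_0_iff add.assoc)
  moreover have "trace x ^ 4 = trace (b * \<delta> ^ K) ^ 4 + trace (b * (\<beta> + \<delta>) ^ K) ^ 4"
    unfolding x_def trace_add[symmetric] fourth_add[symmetric] by (simp add: algebra_simps)
  ultimately have "trace x ^ 4 = \<beta> ^ 4"
    unfolding trace_fourth[OF \<beta>] by (simp add: algebra_simps)
  then have "trace x = \<beta>"
    using frobenius_inj[of _ 2] by simp
  then have "P x = P 0"
    unfolding P_trace by (simp add: x_def trace_def algebra_simps)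
  then have "x = 0"
    using \<open>inj P\<close> by (simp add: inj_eq)
  then show "\<beta> = 0"
    using \<open>trace x = \<beta>\<close> by (simp add: trace_def)
qed

lemma lin_inv_factor_eq_1_if_inj:
  assumes "inj P"
  shows "lin_inv_factor m = 1"
proof (rule lin_inv_factor_eq_1)
  show "C ^ 2 ^ m = C" and "D ^ 2 ^ m = D"
    using C_in D_in by (simp_all add: q_eq)
  show "\<beta> = 0" if "\<beta> ^ 2 ^ m = \<beta>" and "lin \<beta> = 0" for \<beta>
    using no_subfield_root_if_inj[OF assms] that by (simp add: q_eq)
qed (use m_ge_2 card_eq_pow2 in auto)

lemma P_left_inverse:
  assumes "inj P"
  shows "P x + b * (\<delta> + lin_inv m (trace (P x) ^ 4 + B)) ^ K = x"
proof -
  have "lin_inv m (trace (P x) ^ 4 + B) = trace x"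
    using lin_inv_lin[OF m_ge_2, unfolded q_eq[symmetric], OF D_in trace_in]
      lin_inv_factor_eq_1_if_inj[OF assms]
    unfolding lin_trace by simp
  then show ?thesis
    unfolding P_trace by (simp add: algebra_simps)
qed

end

theorem theorem3p10:
  fixes m :: nat and q :: nat and b \<delta> :: "'a::{finite,field}"
    and P Pinv :: "'a \<Rightarrow> 'a" and B C D :: 'a
  assumes hq: "q = 2 ^ m" and hq4: "q \<ge> 4"
    and hcard: "card (UNIV :: 'a set) = q ^ 2"
    and hb: "b ^ q = b" and hb0: "b \<noteq> 0"
    and hdelta: "\<delta> ^ q \<noteq> \<delta>"
    and hB: "B = b ^ 4 * (\<delta> ^ q + \<delta>) ^ 4 * \<delta> ^ (q + 1)"
    and hC: "C = b ^ 4 * (\<delta> ^ q + \<delta>) ^ 4"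
    and hD: "D = b ^ 4 * (\<delta> ^ q + \<delta>) ^ 5"
    and hP: "\<And>x. P x = b * (x ^ q + x + \<delta>) ^ (1 + (q ^ 2 + q) div 4) + x"
    and hPinv: "\<And>x. Pinv x = x + b * (\<delta> + (\<Sum>i = 0..m - 1.
           ((S_seq C D (int m - 2 - int i)) ^ (2 ^ (i + 1))
             + inverse (D ^ (2 ^ (i + 1) - 1)) * S_seq C D (int i))
           * ((x ^ q + x) ^ 4 + B) ^ (2 ^ i))) ^ (1 + (q ^ 2 + q) div 4)"
    and hperm: "bij P"
  shows "(\<forall>x. Pinv (P x) = x) \<and> (\<forall>x. P (Pinv x) = x)"
proof -
  interpret perm_poly_setting m q b \<delta> B C D P
    using hq hq4 hcard hb hb0 hdelta hB hC hD hP by unfold_locales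
  have "Pinv (P x) = x" for x
    using P_left_inverse[OF bij_is_inj[OF hperm], of x] lin_inv_eq_S_seq_sum m_ge_2
    by (simp add: hPinv trace_def K_def)
  then show ?thesis
    using hperm by (metis bij_pointE)
qed

end
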